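(* Let $\boldsymbol{b} = (b_n)_{n \geq 0}$ and $\boldsymbol{\lambda} = (\lambda_n)_{n \geq 0}$ be sequences of positive integers, and let \[ \xi(\boldsymbol{b}, \boldsymbol{\lambda}) = [0, \overline{b_0}^{\lambda_0}, \overline{b_1}^{\lambda_1}, \overline{b_2}^{\lambda_2}, \ldots] \] be the real number whose continued fraction expansion has $0$ as integer part, followed by $\lambda_0$ partial quotients equal to $b_0$, then $\lambda_1$ partial quotients equal to $b_1$, and so on. Assume that \[ \lim_{n \to \infty} b_n = \lim_{n \to \infty} \lambda_n = \lim_{n \to \infty} \frac{\log b_{n+1}}{\sum_{k=0}^{n} \lambda_k \log b_k} = +\infty. \] Then $\xi(\boldsymbol{b}, \boldsymbol{\lambda})$ is a Liouville number, and \[ w_{=2}(\xi(\boldsymbol{b}, \boldsymbol{\lambda})) = w_{=2}^{*}(\xi(\boldsymbol{b}, \boldsymbol{\lambda})) = +\infty. \]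
   Context: For a polynomial $P \in \mathbb{Z}[X]$, $H(P)$ denotes the maximum of the absolute values of its coefficients. For a real algebraic number $\alpha$, $H(\alpha) = H(P)$, where $P$ is the minimal polynomial of $\alpha$ over $\mathbb{Z}$. Let $\xi$ be real and $n \geq 1$ an integer. $w_1(\xi)$ is the supremum of the real numbers $w$ such that, for arbitrarily large $H$, there is a polynomial $P \in \mathbb{Z}[X]$ of degree at most $1$ with $H(P) \leq H$ and $0 < |P(\xi)| \leq H^{-w}$. A real number $\xi$ is a Liouville number if $w_1(\xi) = +\infty$. $w_{=n}(\xi)$ is the supremum of the real numbers $w$ such that, for arbitrarily large $H$, there is an irreducible polynomial $P \in \mathbb{Z}[X]$ of degree exactly $n$ with $H(P) \leq H$ and $0 < |P(\xi)| \leq H^{-w}$. $w_{=n}^{*}(\xi)$ is the supremum of the real numbers $w^{*}$ such that, for arbitrarily large $H$, there is a real algebraic number $\alpha$ of degree exactly $n$ with $H(\alpha) \leq H$ and $0 < |\xi - \alpha| \leq H(\alpha)^{-1} H^{-w^{*}}$. The notation $\overline{a}^{\lambda}$ inside a continued fraction means that the letter $a$ is repeated $\lambda$ times. *)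

theory Defs
  imports Complex_Main "HOL-Computational_Algebra.Polynomial"
    "HOL-Computational_Algebra.Polynomial_Factorial" "HOL-Library.Extended_Real"
begin

definition height :: "int poly \<Rightarrow> int" where
  "height P = Max ((\<lambda>i. \<bar>coeff P i\<bar>) ` {..degree P})"

fun fin_cf :: "(nat \<Rightarrow> nat) \<Rightarrow> nat \<Rightarrow> nat \<Rightarrow> real" where
  "fin_cf a k 0 = real (a k)"
| "fin_cf a k (Suc n) = real (a k) + 1 / fin_cf a (Suc k) n"

definition cf_value :: "(nat \<Rightarrow> nat) \<Rightarrow> real" where
  "cf_value a = lim (\<lambda>n. fin_cf a 0 n)"

(* Partial quotients of [0, b_0 (lambda_0 times), b_1 (lambda_1 times), ...] *)
definition block_quotients :: "(nat \<Rightarrow> nat) \<Rightarrow> (nat \<Rightarrow> nat) \<Rightarrow> nat \<Rightarrow> nat" where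
  "block_quotients b l m =
     (if m = 0 then 0 else b (LEAST j. m \<le> (\<Sum>k\<le>j. l k)))"

definition xi_bl :: "(nat \<Rightarrow> nat) \<Rightarrow> (nat \<Rightarrow> nat) \<Rightarrow> real" where
  "xi_bl b l = cf_value (block_quotients b l)"

definition w1 :: "real \<Rightarrow> ereal" where
  "w1 \<xi> = Sup {ereal w | w. \<forall>H0. \<exists>H::real. H > H0 \<and>
      (\<exists>P::int poly. degree P \<le> 1 \<and> real_of_int (height P) \<le> H \<and>
          0 < \<bar>poly (map_poly real_of_int P) \<xi>\<bar> \<and> \<bar>poly (map_poly real_of_int P) \<xi>\<bar> \<le> H powr (-w))}"

definition liouville :: "real \<Rightarrow> bool" where
  "liouville \<xi> \<longleftrightarrow> w1 \<xi> = \<infinity>"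

definition w_eq :: "nat \<Rightarrow> real \<Rightarrow> ereal" where
  "w_eq n \<xi> = Sup {ereal w | w. \<forall>H0. \<exists>H::real. H > H0 \<and>
      (\<exists>P::int poly. irreducible P \<and> degree P = n \<and> real_of_int (height P) \<le> H \<and>
          0 < \<bar>poly (map_poly real_of_int P) \<xi>\<bar> \<and> \<bar>poly (map_poly real_of_int P) \<xi>\<bar> \<le> H powr (-w))}"

(* minimal polynomial over Z: irreducible integer polynomial vanishing at alpha;
   it is unique up to sign, so its height and degree are well defined *)
definition is_min_poly_Z :: "int poly \<Rightarrow> real \<Rightarrow> bool" where
  "is_min_poly_Z P \<alpha> \<longleftrightarrow> irreducible P \<and> degree P \<ge> 1 \<and> poly (map_poly real_of_int P) \<alpha> = 0"

definition w_star_eq :: "nat \<Rightarrow> real \<Rightarrow> ereal" where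
  "w_star_eq n \<xi> = Sup {ereal w | w. \<forall>H0. \<exists>H::real. H > H0 \<and>
      (\<exists>\<alpha>::real. \<exists>P::int poly. is_min_poly_Z P \<alpha> \<and> degree P = n \<and>
          real_of_int (height P) \<le> H \<and>
          0 < \<bar>\<xi> - \<alpha>\<bar> \<and> \<bar>\<xi> - \<alpha>\<bar> \<le> (1 / real_of_int (height P)) * H powr (-w))}"

end

theory Submission
  imports Defs
begin

text \<open>Let \<open>R_j = \<Prod>_{i<j} (b_i + 1)^l_i\<close>; it bounds the convergents \<open>p/q\<close> of \<open>\<xi>\<close> that end
  just before the \<open>j\<close>-th block. Such a convergent satisfies \<open>0 < |q \<xi> - p| \<le> 1/b_j\<close>, and the
  growth hypothesis makes \<open>b_j\<close> exceed every power of \<open>R_j\<close>, so \<open>\<xi>\<close> is a Liouville number.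
  Replacing the tail of \<open>\<xi>\<close> from the \<open>j\<close>-th block on by the purely periodic \<open>[b_j; b_j, ...]\<close>,
  i.e. by the metallic mean \<open>\<beta>\<close> of \<open>b_j\<close>, gives the quadratic irrational
  \<open>\<alpha> = (p \<beta> + p') / (q \<beta> + q')\<close>. It shares the next \<open>l_j\<close> partial quotients with \<open>\<xi>\<close>, so
  \<open>|\<xi> - \<alpha>| \<le> b_j^(-2 l_j)\<close>, while its minimal polynomial \<open>P\<close> has height \<open>O(b_j R_j\<^sup>2)\<close> and
  \<open>|P(\<xi>)| \<le> 5 H(P) |\<xi> - \<alpha>|\<close>. As \<open>l_j \<rightarrow> \<infinity>\<close> too, this beats every power of the height.\<close>

section \<open>Continued fractions\<close>

definition pos_quotients :: "(nat \<Rightarrow> nat) \<Rightarrow> bool" where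
  "pos_quotients a \<longleftrightarrow> (\<forall>k\<ge>1. a k \<ge> 1)"

text \<open>Convergents with the index shifted by one: \<open>cf_num a (Suc n) / cf_den a (Suc n)\<close> is
  \<open>[a 0; a 1, ..., a n]\<close>, and index 0 holds \<open>p\<^sub>-\<^sub>1 = 1\<close>, \<open>q\<^sub>-\<^sub>1 = 0\<close>. For \<open>x > 0\<close>,
  \<open>cf_mobius a n x\<close> is the value of \<open>[a 0; a 1, ..., a n, x]\<close>.\<close>

fun cf_num :: "(nat \<Rightarrow> nat) \<Rightarrow> nat \<Rightarrow> nat" where
  "cf_num a 0 = 1"
| "cf_num a (Suc 0) = a 0"
| "cf_num a (Suc (Suc n)) = a (Suc n) * cf_num a (Suc n) + cf_num a n"

fun cf_den :: "(nat \<Rightarrow> nat) \<Rightarrow> nat \<Rightarrow> nat" where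
  "cf_den a 0 = 0"
| "cf_den a (Suc 0) = 1"
| "cf_den a (Suc (Suc n)) = a (Suc n) * cf_den a (Suc n) + cf_den a n"

definition cf_mobius :: "(nat \<Rightarrow> nat) \<Rightarrow> nat \<Rightarrow> real \<Rightarrow> real" where
  "cf_mobius a n x = (real (cf_num a (Suc n)) * x + real (cf_num a n))
                      / (real (cf_den a (Suc n)) * x + real (cf_den a n))"

lemma pos_quotientsD: "pos_quotients a \<Longrightarrow> 1 \<le> k \<Longrightarrow> 1 \<le> a k"
  unfolding pos_quotients_def by blast

lemma pos_quotients_shift: "pos_quotients a \<Longrightarrow> pos_quotients (\<lambda>i. a (Suc n + i))"
  unfolding pos_quotients_def by simp

lemma cf_den_Suc_ge_1:
  assumes "pos_quotients a"
  shows "1 \<le> cf_den a (Suc n)"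
proof (induction n)
  case (Suc n)
  have "1 \<le> a (Suc n) * cf_den a (Suc n)"
    using Suc.IH pos_quotientsD[OF assms, of "Suc n"] by (simp add: Suc_le_eq)
  then show ?case by (simp add: trans_le_add1)
qed simp

lemma cf_den_growth:
  assumes "pos_quotients a"
  shows "real n \<le> 2 * real (cf_den a (Suc n))"
proof (induction n rule: nat_induct2)
  case 1
  show ?case using pos_quotientsD[OF assms, of 1] by (simp add: numeral_2_eq_2)
next
  case (step n)
  have "1 \<le> a (n + 2) * cf_den a (n + 2)"
    using cf_den_Suc_ge_1[OF assms, of "Suc n"] pos_quotientsD[OF assms, of "n + 2"] by simp
  then have "1 + cf_den a (Suc n) \<le> cf_den a (Suc (n + 2))"
    by (simp add: numeral_2_eq_2)
  then show ?case using step.IH by linarith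
qed simp

lemma cf_det:
  "int (cf_num a (Suc n)) * int (cf_den a n) - int (cf_num a n) * int (cf_den a (Suc n))
     = (-1) ^ Suc n"
  by (induction n) (simp_all add: algebra_simps)

lemma cf_det_int_abs:
  "\<bar>int (cf_num a (Suc n)) * int (cf_den a n) - int (cf_num a n) * int (cf_den a (Suc n))\<bar> = 1"
  by (simp add: cf_det)

lemma cf_det_abs:
  "\<bar>real (cf_num a (Suc n)) * real (cf_den a n) - real (cf_num a n) * real (cf_den a (Suc n))\<bar> = 1"
  using arg_cong[OF cf_det_int_abs[of a n], of real_of_int] by simp

lemma cf_mobius_denom_pos:
  "pos_quotients a \<Longrightarrow> 0 < x \<Longrightarrow> 0 < real (cf_den a (Suc n)) * x + real (cf_den a n)"
  using cf_den_Suc_ge_1[of a n] by (simp add: add_pos_nonneg)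

lemma cf_mobius_0: "x \<noteq> 0 \<Longrightarrow> cf_mobius a 0 x = a 0 + 1 / x"
  by (simp add: cf_mobius_def field_simps)

lemma cf_mobius_Suc:
  assumes "pos_quotients a" and "0 < y"
  shows "cf_mobius a n (a (Suc n) + 1 / y) = cf_mobius a (Suc n) y"
proof -
  have "real (cf_num a (Suc n)) * (a (Suc n) + 1 / y) + cf_num a n
      = (cf_num a (Suc (Suc n)) * y + cf_num a (Suc n)) / y"
   and "real (cf_den a (Suc n)) * (a (Suc n) + 1 / y) + cf_den a n
      = (cf_den a (Suc (Suc n)) * y + cf_den a (Suc n)) / y"
    using assms(2) by (simp_all add: field_simps)
  then show ?thesis using assms(2) by (simp add: cf_mobius_def)
qed

lemma fin_cf_ge: "real (a k) \<le> fin_cf a k n"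
proof (induction n arbitrary: k)
  case (Suc n)
  have "0 \<le> fin_cf a (Suc k) n" using Suc.IH[of "Suc k"] by linarith
  then show ?case by simp
qed simp

lemma fin_cf_ge_1: "pos_quotients a \<Longrightarrow> 1 \<le> k \<Longrightarrow> 1 \<le> fin_cf a k n"
  using fin_cf_ge[of a k n] pos_quotientsD[of a k] by linarith

lemma fin_cf_shift: "fin_cf a k n = fin_cf (\<lambda>i. a (k + i)) 0 n"
proof (induction n arbitrary: a k)
  case (Suc n)
  show ?case using Suc.IH[of a "Suc k"] Suc.IH[of "\<lambda>i. a (k + i)" 1] by simp
qed simp

lemma fin_cf_eq_cf_mobius:
  assumes "pos_quotients a"
  shows "fin_cf a 0 (Suc n + m) = cf_mobius a n (fin_cf a (Suc n) m)"
proof (induction n arbitrary: m)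
  case 0
  show ?case using fin_cf_ge_1[OF assms, of 1 m] by (simp add: cf_mobius_0)
next
  case (Suc n)
  have "fin_cf a 0 (Suc (Suc n) + m) = cf_mobius a n (fin_cf a (Suc n) (Suc m))"
    using Suc.IH[of "Suc m"] by simp
  also have "\<dots> = cf_mobius a n (a (Suc n) + 1 / fin_cf a (Suc (Suc n)) m)"
    by simp
  also have "\<dots> = cf_mobius a (Suc n) (fin_cf a (Suc (Suc n)) m)"
    using fin_cf_ge_1[OF assms, of "Suc (Suc n)" m] by (intro cf_mobius_Suc assms) auto
  finally show ?case .
qed

lemma mobius_diff:
  fixes P P' Q Q' s t :: real
  assumes "Q * s + Q' \<noteq> 0" "Q * t + Q' \<noteq> 0"
  shows "(P * s + P') / (Q * s + Q') - (P * t + P') / (Q * t + Q')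
         = (P * Q' - P' * Q) * (s - t) / ((Q * s + Q') * (Q * t + Q'))"
  using assms by (simp add: field_simps)

lemma cf_mobius_diff:
  fixes s t :: real
  assumes "pos_quotients a" "0 < s" "0 < t"
  shows "\<bar>cf_mobius a n s - cf_mobius a n t\<bar>
    = \<bar>s - t\<bar> / ((cf_den a (Suc n) * s + cf_den a n) * (cf_den a (Suc n) * t + cf_den a n))"
  using mobius_diff[of "cf_den a (Suc n)" s "cf_den a n" t "cf_num a (Suc n)" "cf_num a n"]
    cf_mobius_denom_pos[OF assms(1,2), of n] cf_mobius_denom_pos[OF assms(1,3), of n]
    cf_det_abs[of a n]
  by (simp add: cf_mobius_def abs_mult)

lemma cf_mobius_inj:
  fixes s t :: real
  assumes "pos_quotients a" "0 < s" "0 < t" "cf_mobius a n s = cf_mobius a n t"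
  shows "s = t"
  using assms cf_mobius_diff[of a s t n] cf_mobius_denom_pos[of a s n] cf_mobius_denom_pos[of a t n]
  by simp

lemma cf_mobius_dist_le:
  fixes s t :: real
  assumes "pos_quotients a" "1 \<le> s" "1 \<le> t"
  shows "\<bar>cf_mobius a n s - cf_mobius a n t\<bar> \<le> 1 / real (cf_den a (Suc n)) ^ 2"
proof -
  define q where "q = real (cf_den a (Suc n))"
  have q: "1 \<le> q" using cf_den_Suc_ge_1[OF assms(1)] unfolding q_def by simp
  have "\<bar>cf_mobius a n s - cf_mobius a n t\<bar>
      = \<bar>s - t\<bar> / ((q * s + cf_den a n) * (q * t + cf_den a n))"
    using cf_mobius_diff[OF assms(1), of s t] assms unfolding q_def by simp
  also have "\<dots> \<le> \<bar>s - t\<bar> / ((q * s) * (q * t))"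
    using assms q by (intro divide_left_mono mult_mono mult_pos_pos add_pos_nonneg) auto
  also have "\<dots> \<le> (s * t) / ((q * s) * (q * t))"
  proof -
    have "s \<le> s * t" "t \<le> s * t" using assms(2,3)
      by (simp_all add: mult_le_cancel_left1 mult_le_cancel_right1)
    then have "\<bar>s - t\<bar> \<le> s * t" using assms(2,3) by linarith
    then show ?thesis using assms q by (intro divide_right_mono) auto
  qed
  also have "\<dots> = 1 / q ^ 2" using assms q by (simp add: field_simps power2_eq_square)
  finally show ?thesis unfolding q_def .
qed

lemma fin_cf_tendsto_cf_value:
  assumes "pos_quotients a"
  shows "(\<lambda>m. fin_cf a 0 m) \<longlonglongrightarrow> cf_value a"
proof -
  have "Cauchy (\<lambda>m. fin_cf a 0 m)"
  proof (rule metric_CauchyI)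
    fix e :: real assume e: "0 < e"
    obtain n :: nat where n: "2 / e < n" using reals_Archimedean2 by blast
    define q where "q = real (cf_den a (Suc n))"
    have q: "1 \<le> q" using cf_den_Suc_ge_1[OF assms] unfolding q_def by simp
    have "1 / e < q" using n cf_den_growth[OF assms, of n] unfolding q_def by simp
    then have "1 / q < e" using e q by (simp add: field_simps)
    moreover have "1 / q ^ 2 \<le> 1 / q" using q by (simp add: field_simps power2_eq_square)
    ultimately have small: "1 / q ^ 2 < e" by linarith
    show "\<exists>M. \<forall>m\<ge>M. \<forall>m'\<ge>M. dist (fin_cf a 0 m) (fin_cf a 0 m') < e"
    proof (intro exI allI impI)
      fix m m' assume "Suc n \<le> m" "Suc n \<le> m'"
      then have "dist (fin_cf a 0 m) (fin_cf a 0 m')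
          = \<bar>cf_mobius a n (fin_cf a (Suc n) (m - Suc n))
              - cf_mobius a n (fin_cf a (Suc n) (m' - Suc n))\<bar>"
        using fin_cf_eq_cf_mobius[OF assms, of n "m - Suc n"]
          fin_cf_eq_cf_mobius[OF assms, of n "m' - Suc n"] by (simp add: dist_real_def)
      also have "\<dots> \<le> 1 / q ^ 2"
        unfolding q_def by (intro cf_mobius_dist_le assms fin_cf_ge_1) auto
      finally show "dist (fin_cf a 0 m) (fin_cf a 0 m') < e" using small by linarith
    qed
  qed
  then show ?thesis
    unfolding cf_value_def by (simp add: Cauchy_convergent_iff convergent_LIMSEQ_iff)
qed

lemma cf_value_ge_first_quotient: "pos_quotients a \<Longrightarrow> real (a 0) \<le> cf_value a"
  by (rule LIMSEQ_le_const[OF fin_cf_tendsto_cf_value]) (auto intro: fin_cf_ge)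

lemma cf_value_tail:
  assumes "pos_quotients a"
  shows "cf_value a = cf_mobius a n (cf_value (\<lambda>i. a (Suc n + i)))"
proof -
  define z where "z = cf_value (\<lambda>i. a (Suc n + i))"
  have z: "1 \<le> z"
    using cf_value_ge_first_quotient[OF pos_quotients_shift[OF assms, of n]]
      pos_quotientsD[OF assms, of "Suc n"]
    unfolding z_def by simp
  have "(\<lambda>k. fin_cf a (Suc n) k) \<longlonglongrightarrow> z"
    using fin_cf_tendsto_cf_value[OF pos_quotients_shift[OF assms, of n]] unfolding z_def
    by (subst fin_cf_shift) simp
  then have "(\<lambda>k. cf_mobius a n (fin_cf a (Suc n) k)) \<longlonglongrightarrow> cf_mobius a n z"
    unfolding cf_mobius_def
    using cf_mobius_denom_pos[OF assms, of z n] z by (intro tendsto_intros) auto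
  moreover have "(\<lambda>k. fin_cf a 0 (k + Suc n)) \<longlonglongrightarrow> cf_value a"
    using LIMSEQ_ignore_initial_segment[OF fin_cf_tendsto_cf_value[OF assms]] .
  ultimately show ?thesis
    using LIMSEQ_unique fin_cf_eq_cf_mobius[OF assms, of n]
    unfolding z_def by (simp add: add.commute)
qed

lemma cf_value_convergent_dist:
  fixes a :: "nat \<Rightarrow> nat" and n :: nat
  assumes "pos_quotients a"
  defines "p \<equiv> real (cf_num a (Suc n))" and "q \<equiv> real (cf_den a (Suc n))"
  shows "0 < \<bar>q * cf_value a - p\<bar>" and "\<bar>q * cf_value a - p\<bar> \<le> 1 / a (Suc n)"
proof -
  define z where "z = cf_value (\<lambda>i. a (Suc n + i))"
  define D where "D = q * z + cf_den a n"
  have z: "a (Suc n) \<le> z" "1 \<le> z"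
    using cf_value_ge_first_quotient[OF pos_quotients_shift[OF assms(1), of n]]
      pos_quotientsD[OF assms(1), of "Suc n"]
    unfolding z_def by simp_all
  have q: "1 \<le> q" using cf_den_Suc_ge_1[OF assms(1)] unfolding q_def by simp
  have "z \<le> q * z" using q z by (simp add: mult_le_cancel_right1)
  then have D: "z \<le> D" unfolding D_def by simp
  have "cf_value a = (p * z + cf_num a n) / D"
    unfolding cf_value_tail[OF assms(1), of n] cf_mobius_def p_def q_def D_def z_def ..
  then have "q * cf_value a - p = (q * cf_num a n - p * cf_den a n) / D"
    using D z by (simp add: D_def field_simps)
  then have eq: "\<bar>q * cf_value a - p\<bar> = 1 / D"
    using cf_det_abs[of a n] D z by (simp add: abs_minus_commute p_def q_def mult.commute)
  show "0 < \<bar>q * cf_value a - p\<bar>" using eq D z by simp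
  show "\<bar>q * cf_value a - p\<bar> \<le> 1 / a (Suc n)"
    unfolding eq using D z pos_quotientsD[OF assms(1), of "Suc n"]
    by (intro divide_left_mono) auto
qed

definition quot_prod :: "(nat \<Rightarrow> nat) \<Rightarrow> nat \<Rightarrow> nat" where
  "quot_prod a n = (\<Prod>k<n. a k + 1)"

lemma quot_prod_Suc: "quot_prod a (Suc n) = quot_prod a n * (a n + 1)"
  by (simp add: quot_prod_def)

lemma cf_num_den_le_quot_prod: "cf_num a n \<le> quot_prod a n \<and> cf_den a n \<le> quot_prod a n"
proof (induction a n rule: cf_num.induct)
  case (3 a n)
  have "quot_prod a n \<le> quot_prod a (Suc n)" by (simp add: quot_prod_def)
  moreover have "quot_prod a (Suc (Suc n)) = a (Suc n) * quot_prod a (Suc n) + quot_prod a (Suc n)"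
    by (simp add: quot_prod_def)
  ultimately show ?case using 3 by (simp add: add_mono)
qed (simp_all add: quot_prod_def)

lemma cf_den_const_block:
  assumes "pos_quotients a" and "\<And>d. d \<in> {1..L} \<Longrightarrow> a (M + d) = c"
  shows "c ^ L \<le> cf_den a (Suc (M + L))"
  using assms(2)
proof (induction L)
  case 0
  show ?case using cf_den_Suc_ge_1[OF assms(1)] by simp
next
  case (Suc L)
  have "c ^ L \<le> cf_den a (Suc (M + L))" using Suc by simp
  then have "c * c ^ L \<le> c * cf_den a (Suc (M + L))" by simp
  also have "\<dots> \<le> cf_den a (Suc (M + Suc L))" using Suc.prems[of "Suc L"] by simp
  finally show ?case by simp
qed

lemma cf_mobius_const_block:
  assumes "pos_quotients a" and "\<And>d. d \<in> {1..L} \<Longrightarrow> a (M + d) = c"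
    and "0 < \<beta>" and "\<beta> = c + 1 / \<beta>"
  shows "cf_mobius a (M + L) \<beta> = cf_mobius a M \<beta>"
  using assms(2)
proof (induction L)
  case (Suc L)
  have "cf_mobius a (M + Suc L) \<beta> = cf_mobius a (M + L) (a (Suc (M + L)) + 1 / \<beta>)"
    using cf_mobius_Suc[OF assms(1,3), of "M + L"] by simp
  also have "a (Suc (M + L)) = c" using Suc.prems[of "Suc L"] by simp
  finally show ?case using Suc assms(4) by simp
qed simp

section \<open>Metallic means\<close>

definition metallic_mean :: "nat \<Rightarrow> real" where
  "metallic_mean c = (c + sqrt (c\<^sup>2 + 4)) / 2"

lemma metallic_mean_root: "metallic_mean c ^ 2 - c * metallic_mean c - 1 = 0"
proof -
  have "sqrt (real c ^ 2 + 4) ^ 2 = real c ^ 2 + 4" by simp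
  then show ?thesis unfolding metallic_mean_def by (simp add: power2_eq_square field_simps)
qed

lemma metallic_mean_bounds:
  assumes "1 \<le> c"
  shows "real c < metallic_mean c" and "metallic_mean c < real c + 1"
proof -
  have "sqrt (real c ^ 2) < sqrt (real c ^ 2 + 4)" by (subst real_sqrt_less_iff) simp
  then show "real c < metallic_mean c" unfolding metallic_mean_def by simp
  have "sqrt (real c ^ 2 + 4) < sqrt ((real c + 2) ^ 2)"
    using assms by (subst real_sqrt_less_iff) (simp add: power2_eq_square algebra_simps)
  then show "metallic_mean c < real c + 1" unfolding metallic_mean_def by simp
qed

lemma metallic_mean_pos: "0 < metallic_mean c"
  unfolding metallic_mean_def by (simp add: add_nonneg_pos)

lemma metallic_mean_fixpoint: "metallic_mean c = c + 1 / metallic_mean c"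
  using metallic_mean_root[of c] metallic_mean_pos[of c]
  by (simp add: field_simps power2_eq_square)

lemma metallic_mean_unique:
  assumes "0 < y" and "y\<^sup>2 - c * y - 1 = 0"
  shows "y = metallic_mean c"
proof -
  have sq: "(2 * y - c)\<^sup>2 = c\<^sup>2 + 4"
    using assms(2) by (simp add: power2_eq_square algebra_simps)
  have "c * y < y * y" using assms(2) by (simp add: power2_eq_square algebra_simps)
  then have "c < y" using assms(1) by simp
  then have "0 \<le> 2 * y - c" by simp
  with sq have "sqrt (c\<^sup>2 + 4) = 2 * y - c" by (rule real_sqrt_unique)
  then show ?thesis unfolding metallic_mean_def by simp
qed

text \<open>A rational root of the monic \<open>X\<^sup>2 - c X - 1\<close> would be an integer, but it lies strictly
  between \<open>c\<close> and \<open>c + 1\<close>.\<close>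
lemma metallic_mean_irrational:
  assumes "1 \<le> c"
  shows "metallic_mean c \<notin> \<rat>"
proof
  assume rat: "metallic_mean c \<in> \<rat>"
  have "algebraic_int (metallic_mean c)"
  proof (rule algebraic_int.intros)
    show "lead_coeff [:-1, - real c, 1:] = 1" and "\<forall>i. coeff [:-1, - real c, 1:] i \<in> \<int>"
      by (auto simp: coeff_pCons split: nat.splits)
    show "poly [:-1, - real c, 1:] (metallic_mean c) = 0"
      using metallic_mean_root[of c] by (simp add: power2_eq_square algebra_simps)
  qed
  then obtain k :: int where "metallic_mean c = k"
    using rational_algebraic_int_is_int[OF _ rat] by (auto elim: Ints_cases)
  then have "int c < k" "k < int c + 1" using metallic_mean_bounds[OF assms] by linarith+
  then show False by simp
qed

section \<open>Heights of integer polynomials\<close>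

lemma height_leI: "(\<And>i. \<bar>coeff P i\<bar> \<le> B) \<Longrightarrow> height P \<le> B"
  unfolding height_def by (subst Max_le_iff) auto

lemma abs_coeff_le_height: "\<bar>coeff P i\<bar> \<le> height P"
proof (cases "i \<le> degree P")
  case True
  then show ?thesis unfolding height_def by (intro Max_ge) auto
next
  case False
  have "\<bar>coeff P 0\<bar> \<le> height P" unfolding height_def by (intro Max_ge) auto
  then show ?thesis using False by (simp add: coeff_eq_0)
qed

lemma height_ge_1: "P \<noteq> 0 \<Longrightarrow> 1 \<le> height P"
  using abs_coeff_le_height[of P "degree P"] leading_coeff_neq_0[of P] by linarith

lemma map_poly_of_int_mult:
  "map_poly (of_int :: int \<Rightarrow> real) (f * g) = map_poly of_int f * map_poly of_int g"
  by (rule poly_eqI) (simp add: coeff_mult coeff_map_poly)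

lemma poly_of_int_primitive_part:
  "poly (map_poly real_of_int Q) x = content Q * poly (map_poly real_of_int (primitive_part Q)) x"
  by (subst (1) content_times_primitive_part[symmetric, of Q])
    (simp del: content_times_primitive_part add: map_poly_smult)

lemma rational_root_of_degree_le_1:
  fixes P :: "int poly"
  assumes "P \<noteq> 0" "degree P \<le> 1" "poly (map_poly real_of_int P) x = 0"
  shows "x \<in> \<rat>"
proof -
  define u v where "u = coeff P 0" and "v = coeff P 1"
  have P: "P = [:u, v:]"
    using assms(2) unfolding u_def v_def
    by (intro poly_eqI) (auto simp: coeff_pCons coeff_eq_0 split: nat.splits)
  have root: "u + x * v = 0" using assms(3) by (simp add: P map_poly_pCons)
  have "v \<noteq> 0" using P root assms(1) by auto
  then have "x = - u / v" using root by (simp add: field_simps)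
  then show ?thesis by simp
qed

lemma irreducible_quadratic_of_irrational_root:
  fixes P :: "int poly"
  assumes "content P = 1" "degree P = 2"
    and "poly (map_poly real_of_int P) \<alpha> = 0" "\<alpha> \<notin> \<rat>"
  shows "irreducible P"
proof (rule irreducibleI)
  show P0: "P \<noteq> 0" using assms(2) by auto
  show "\<not> P dvd 1" using assms(2) by (auto simp: is_unit_poly_iff)
  fix f g assume fg: "P = f * g"
  then have f0: "f \<noteq> 0" and g0: "g \<noteq> 0" using P0 by auto
  have const_unit: "h dvd 1" if "degree h = 0" "h dvd P" for h
  proof -
    have h: "h = [:coeff h 0:]" using that(1) by (rule degree_0_id[symmetric])
    then have "coeff h 0 dvd 1" using that(2) assms(1) const_poly_dvd_iff_dvd_content by metis
    then show ?thesis by (subst h) (simp add: is_unit_const_poly_iff)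
  qed
  show "f dvd 1 \<or> g dvd 1"
  proof (rule ccontr)
    assume "\<not> (f dvd 1 \<or> g dvd 1)"
    then have "degree f \<noteq> 0" "degree g \<noteq> 0" using const_unit[of f] const_unit[of g] fg by auto
    moreover have "degree f + degree g = 2" using fg assms(2) degree_mult_eq[OF f0 g0] by simp
    ultimately have "degree f = 1" "degree g = 1" by auto
    have "poly (map_poly real_of_int f) \<alpha> * poly (map_poly real_of_int g) \<alpha> = 0"
      using assms(3) fg by (simp add: map_poly_of_int_mult)
    then have "\<alpha> \<in> \<rat>"
      using rational_root_of_degree_le_1[OF f0] rational_root_of_degree_le_1[OF g0]
        \<open>degree f = 1\<close> \<open>degree g = 1\<close> by auto
    then show False using assms(4) by simp
  qed
qed

lemma primitive_part_min_poly:
  fixes Q :: "int poly"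
  assumes "Q \<noteq> 0" "degree Q \<le> 2" "poly (map_poly real_of_int Q) \<alpha> = 0" "\<alpha> \<notin> \<rat>"
  shows "is_min_poly_Z (primitive_part Q) \<alpha>" and "degree (primitive_part Q) = 2"
proof -
  have "degree Q = 2" using rational_root_of_degree_le_1[OF assms(1) _ assms(3)] assms(2,4)
    by linarith
  then show deg: "degree (primitive_part Q) = 2" by simp
  have root: "poly (map_poly real_of_int (primitive_part Q)) \<alpha> = 0"
    using assms(1,3) poly_of_int_primitive_part[of Q \<alpha>] by simp
  have "irreducible (primitive_part Q)"
    using assms(1) deg root assms(4) by (intro irreducible_quadratic_of_irrational_root) simp_all
  then show "is_min_poly_Z (primitive_part Q) \<alpha>"
    unfolding is_min_poly_Z_def using deg root by simp
qed

lemma height_primitive_part_le: "height (primitive_part Q) \<le> height Q"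
proof (rule height_leI)
  fix i
  have "\<bar>coeff (primitive_part Q) i\<bar> \<le> \<bar>coeff Q i\<bar>"
  proof (cases "Q = 0")
    case False
    then have "content Q \<noteq> 0" by simp
    then have "1 \<le> \<bar>content Q\<bar>" by linarith
    moreover have "coeff Q i = content Q * coeff (primitive_part Q) i"
      using arg_cong[OF content_times_primitive_part[of Q], of "\<lambda>p. coeff p i"]
      by (simp del: content_times_primitive_part)
    ultimately show ?thesis by (simp add: abs_mult mult_le_cancel_right1)
  qed simp
  then show "\<bar>coeff (primitive_part Q) i\<bar> \<le> height Q" using abs_coeff_le_height[of Q i] by linarith
qed

lemma abs_poly_diff_le_degree2:
  fixes P :: "int poly" and x y r :: real
  assumes "degree P \<le> 2" "\<bar>x\<bar> \<le> r" "\<bar>y\<bar> \<le> r"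
  shows "\<bar>poly (map_poly real_of_int P) x - poly (map_poly real_of_int P) y\<bar>
           \<le> (1 + 2 * r) * height P * \<bar>x - y\<bar>"
proof -
  define u v w where "u = coeff P 0" and "v = coeff P 1" and "w = coeff P 2"
  define A B H where "A = real_of_int w" and "B = real_of_int v" and "H = real_of_int (height P)"
  have P: "P = [:u, v, w:]"
    using assms(1) unfolding u_def v_def w_def
    by (intro poly_eqI) (auto simp: coeff_pCons coeff_eq_0 numeral_2_eq_2 split: nat.splits)
  have AB: "\<bar>A\<bar> \<le> H" "\<bar>B\<bar> \<le> H"
    unfolding A_def B_def H_def v_def w_def using abs_coeff_le_height[of P]
    by (simp_all only: of_int_abs[symmetric] of_int_le_iff)
  have "poly (map_poly real_of_int P) x - poly (map_poly real_of_int P) y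
      = (x - y) * (B + A * (x + y))"
    by (simp add: P A_def B_def map_poly_pCons algebra_simps)
  then have eq: "\<bar>poly (map_poly real_of_int P) x - poly (map_poly real_of_int P) y\<bar>
      = \<bar>x - y\<bar> * \<bar>B + A * (x + y)\<bar>"
    by (simp only: abs_mult)
  have "\<bar>B + A * (x + y)\<bar> \<le> (1 + 2 * r) * H"
  proof -
    have "\<bar>A * (x + y)\<bar> \<le> H * (2 * r)"
      unfolding abs_mult using AB assms(2,3) by (intro mult_mono) auto
    then show ?thesis using AB by (simp add: algebra_simps)
  qed
  then have "\<bar>x - y\<bar> * \<bar>B + A * (x + y)\<bar> \<le> \<bar>x - y\<bar> * ((1 + 2 * r) * H)"
    by (intro mult_left_mono) auto
  then show ?thesis unfolding eq H_def by (simp add: mult_ac)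
qed

text \<open>If \<open>x = (p y + p') / (q y + q')\<close> then \<open>y = (p' - q' x) / (q x - p)\<close>; substituting this into
  \<open>y\<^sup>2 - c y - 1\<close> and clearing the denominator \<open>(q x - p)\<^sup>2\<close> gives this polynomial in \<open>x\<close>.\<close>
definition mobius_quadratic :: "int \<Rightarrow> int \<Rightarrow> int \<Rightarrow> int \<Rightarrow> int \<Rightarrow> int poly" where
  "mobius_quadratic c p p' q q' =
     [:p'\<^sup>2 + c * p' * p - p\<^sup>2,
       - 2 * p' * q' - c * (q' * p + p' * q) + 2 * p * q,
       q'\<^sup>2 + c * q' * q - q\<^sup>2:]"

lemma poly_mobius_quadratic:
  "poly (map_poly real_of_int (mobius_quadratic c p p' q q')) x =
     (q' * x - p')\<^sup>2 + c * (q' * x - p') * (q * x - p) - (q * x - p)\<^sup>2"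
  by (simp add: mobius_quadratic_def map_poly_pCons power2_eq_square algebra_simps)

lemma poly_mobius_quadratic_mobius:
  fixes c p p' q q' :: int and y :: real
  assumes "\<bar>p * q' - p' * q\<bar> = 1" and "q * y + q' \<noteq> 0"
  shows "poly (map_poly real_of_int (mobius_quadratic c p p' q q')) ((p * y + p') / (q * y + q'))
           = (y\<^sup>2 - c * y - 1) / (q * y + q')\<^sup>2"
proof -
  define e D where "e = real_of_int (p * q' - p' * q)" and "D = q * y + q'"
  have e: "e\<^sup>2 = 1"
    using assms(1) unfolding e_def by (metis of_int_1 of_int_abs of_int_eq_iff power2_abs power_one)
  have D: "D \<noteq> 0" using assms(2) unfolding D_def .
  have num: "real_of_int q' * ((p * y + p') / D) - p' = e * y / D"
    and den: "real_of_int q * ((p * y + p') / D) - p = - e / D"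
    using D unfolding e_def D_def by (simp_all add: field_simps)
  have "poly (map_poly real_of_int (mobius_quadratic c p p' q q')) ((p * y + p') / D)
      = (e * y / D)\<^sup>2 + c * (e * y / D) * (- e / D) - (- e / D)\<^sup>2"
    unfolding poly_mobius_quadratic num den ..
  also have "\<dots> = e\<^sup>2 * (y\<^sup>2 - c * y - 1) / D\<^sup>2"
    using D by (simp add: field_simps power2_eq_square)
  finally show ?thesis using e unfolding D_def by simp
qed

lemma height_mobius_quadratic:
  fixes c p p' q q' R :: int
  assumes "0 \<le> c" and "p \<in> {0..R}" "p' \<in> {0..R}" "q \<in> {0..R}" "q' \<in> {0..R}"
  shows "height (mobius_quadratic c p p' q q') \<le> 2 * (c + 1) * R\<^sup>2"
proof (rule height_leI)
  have prod: "0 \<le> x * y \<and> x * y \<le> R\<^sup>2" if "x \<in> {0..R}" "y \<in> {0..R}" for x y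
    using that by (auto simp: power2_eq_square intro: mult_mono)
  have sq: "0 \<le> x\<^sup>2 \<and> x\<^sup>2 \<le> R\<^sup>2" if "x \<in> {0..R}" for x
    using prod[OF that that] by (simp add: power2_eq_square)
  have cprod: "0 \<le> c * x * y \<and> c * x * y \<le> c * R\<^sup>2" if "x \<in> {0..R}" "y \<in> {0..R}" for x y
    using prod[OF that] assms(1) by (simp add: mult_left_mono mult.assoc)
  have split: "2 * (c + 1) * R\<^sup>2 = 2 * (c * R\<^sup>2) + 2 * R\<^sup>2" by (simp add: algebra_simps)
  have "\<bar>p'\<^sup>2 + c * p' * p - p\<^sup>2\<bar> \<le> 2 * (c + 1) * R\<^sup>2"
    unfolding split abs_le_iff using sq[of p] sq[of p'] cprod[of p' p] assms by linarith
  moreover have "\<bar>q'\<^sup>2 + c * q' * q - q\<^sup>2\<bar> \<le> 2 * (c + 1) * R\<^sup>2"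
    unfolding split abs_le_iff using sq[of q] sq[of q'] cprod[of q' q] assms by linarith
  moreover have "\<bar>- 2 * p' * q' - c * (q' * p + p' * q) + 2 * p * q\<bar> \<le> 2 * (c + 1) * R\<^sup>2"
  proof -
    have "- 2 * p' * q' - c * (q' * p + p' * q) + 2 * p * q
        = 2 * (p * q) - 2 * (p' * q') - c * q' * p - c * p' * q"
      by (simp add: algebra_simps)
    then show ?thesis
      unfolding split abs_le_iff
      using prod[of p q] prod[of p' q'] cprod[of q' p] cprod[of p' q] assms
      by linarith
  qed
  moreover have "0 \<le> 2 * (c + 1) * R\<^sup>2" using assms(1) by simp
  ultimately show "\<bar>coeff (mobius_quadratic c p p' q q') i\<bar> \<le> 2 * (c + 1) * R\<^sup>2" for i
    by (auto simp: mobius_quadratic_def coeff_pCons split: nat.splits)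
qed

lemma mobius_irrational:
  fixes p p' q q' :: int and \<beta> :: real
  assumes "p * q' - p' * q \<noteq> 0" and "\<beta> \<notin> \<rat>"
  shows "(p * \<beta> + p') / (q * \<beta> + q') \<notin> \<rat>"
proof
  define x where "x = (p * \<beta> + p') / (q * \<beta> + q')"
  assume "x \<in> \<rat>"
  have "q * \<beta> + q' \<noteq> 0"
  proof
    assume pole: "q * \<beta> + q' = 0"
    show False
    proof (cases "q = 0")
      case True
      then show False using pole assms(1) by simp
    next
      case False
      then have "\<beta> = - q' / q" using pole by (simp add: field_simps)
      then show False using assms(2) by simp
    qed
  qed
  then have "(x * q - p) * \<beta> = p' - x * q'" unfolding x_def by (simp add: field_simps)
  moreover have "x * q - p \<noteq> 0"
  proof
    assume "x * q - p = 0"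
    with \<open>(x * q - p) * \<beta> = p' - x * q'\<close> have "p = x * q" "p' = x * q'" by simp_all
    then have "real_of_int (p * q' - p' * q) = x * q * q' - x * q' * q" by simp
    then have "real_of_int (p * q' - p' * q) = 0" by (simp only: mult_ac diff_self)
    then show False using assms(1) by (simp only: of_int_eq_0_iff)
  qed
  ultimately have "\<beta> = (p' - x * q') / (x * q - p)" by (simp add: field_simps)
  also have "\<dots> \<in> \<rat>" using \<open>x \<in> \<rat>\<close> by simp
  finally show False using assms(2) by simp
qed

section \<open>Quadratic approximation by a periodic tail\<close>

lemma cf_metallic_approx:
  assumes pos: "pos_quotients a" and c: "1 \<le> c"
    and block: "\<And>d. d \<in> {1..L} \<Longrightarrow> a (M + d) = c" and next_gt: "c < a (Suc (M + L))"
  defines "\<alpha> \<equiv> cf_mobius a M (metallic_mean c)"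
  shows "0 < \<bar>cf_value a - \<alpha>\<bar>" and "\<bar>cf_value a - \<alpha>\<bar> \<le> 1 / real c ^ (2 * L)"
proof -
  define \<beta> z where "\<beta> = metallic_mean c" and "z = cf_value (\<lambda>i. a (Suc (M + L) + i))"
  have \<alpha>: "\<alpha> = cf_mobius a (M + L) \<beta>"
    unfolding \<alpha>_def \<beta>_def
    by (rule cf_mobius_const_block[OF pos block metallic_mean_pos metallic_mean_fixpoint,
          symmetric])
  have \<xi>: "cf_value a = cf_mobius a (M + L) z"
    unfolding z_def by (rule cf_value_tail[OF pos])
  have "real c + 1 \<le> z"
    using next_gt cf_value_ge_first_quotient[OF pos_quotients_shift[OF pos, of "M + L"]]
    unfolding z_def by simp
  then have \<beta>z: "1 \<le> \<beta>" "\<beta> < z"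
    using metallic_mean_bounds[OF c] c unfolding \<beta>_def by linarith+
  show "0 < \<bar>cf_value a - \<alpha>\<bar>"
    using cf_mobius_inj[OF pos, of z \<beta>] \<beta>z unfolding \<xi> \<alpha> by auto
  have "\<bar>cf_value a - \<alpha>\<bar> \<le> 1 / real (cf_den a (Suc (M + L))) ^ 2"
    unfolding \<xi> \<alpha> using \<beta>z by (intro cf_mobius_dist_le pos) auto
  also have "\<dots> \<le> 1 / (real c ^ L) ^ 2"
  proof -
    have "real c ^ L \<le> real (cf_den a (Suc (M + L)))"
      using cf_den_const_block[OF pos block] by (simp flip: of_nat_power)
    moreover have "0 < real c ^ L" using c by simp
    ultimately show ?thesis
      using cf_den_Suc_ge_1[OF pos, of "M + L"]
      by (intro divide_left_mono power_mono mult_pos_pos) auto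
  qed
  finally show "\<bar>cf_value a - \<alpha>\<bar> \<le> 1 / real c ^ (2 * L)"
    by (simp add: power_mult mult.commute)
qed

definition cf_metallic_poly :: "(nat \<Rightarrow> nat) \<Rightarrow> nat \<Rightarrow> nat \<Rightarrow> int poly" where
  "cf_metallic_poly a M c = mobius_quadratic (int c) (int (cf_num a (Suc M))) (int (cf_num a M))
     (int (cf_den a (Suc M))) (int (cf_den a M))"

lemma poly_cf_metallic_poly_eq_0_iff:
  assumes "pos_quotients a" and "0 < y"
  shows "poly (map_poly real_of_int (cf_metallic_poly a M c)) (cf_mobius a M y) = 0
    \<longleftrightarrow> y = metallic_mean c"
proof -
  have "poly (map_poly real_of_int (cf_metallic_poly a M c)) (cf_mobius a M y)
      = (y\<^sup>2 - c * y - 1) / (cf_den a (Suc M) * y + cf_den a M)\<^sup>2"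
    using poly_mobius_quadratic_mobius[OF cf_det_int_abs[of a M], of y "int c"]
      cf_mobius_denom_pos[OF assms, of M]
    unfolding cf_metallic_poly_def cf_mobius_def by simp
  then show ?thesis
    using cf_mobius_denom_pos[OF assms, of M] metallic_mean_unique[OF assms(2)]
      metallic_mean_root[of c]
    by auto
qed

lemma height_cf_metallic_poly:
  "height (cf_metallic_poly a M c) \<le> 2 * (int c + 1) * int (quot_prod a (Suc M)) ^ 2"
proof -
  have "quot_prod a M \<le> quot_prod a (Suc M)" by (simp add: quot_prod_def)
  then show ?thesis
    unfolding cf_metallic_poly_def
    using cf_num_den_le_quot_prod[of a M] cf_num_den_le_quot_prod[of a "Suc M"]
    by (intro height_mobius_quadratic) auto
qed

lemma cf_mobius_metallic_irrational: "1 \<le> c \<Longrightarrow> cf_mobius a M (metallic_mean c) \<notin> \<rat>"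
  using mobius_irrational[OF _ metallic_mean_irrational,
      of "int (cf_num a (Suc M))" "int (cf_den a M)"
      "int (cf_num a M)" "int (cf_den a (Suc M))" c] cf_det_int_abs[of a M]
  unfolding cf_mobius_def by auto

lemma cf_block_quadratic_approx:
  assumes pos: "pos_quotients a" and c: "1 \<le> c"
    and block: "\<And>d. d \<in> {1..L} \<Longrightarrow> a (M + d) = c" and next_gt: "c < a (Suc (M + L))"
  obtains \<alpha> P where "is_min_poly_Z P \<alpha>" "degree P = 2"
    "height P \<le> 2 * (int c + 1) * int (quot_prod a (Suc M)) ^ 2"
    "0 < \<bar>cf_value a - \<alpha>\<bar>" "\<bar>cf_value a - \<alpha>\<bar> \<le> 1 / real c ^ (2 * L)"
    "poly (map_poly real_of_int P) \<alpha> = 0" "poly (map_poly real_of_int P) (cf_value a) \<noteq> 0"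
proof -
  define \<alpha> Q where "\<alpha> = cf_mobius a M (metallic_mean c)" and "Q = cf_metallic_poly a M c"
  note close = cf_metallic_approx[OF pos c block next_gt, folded \<alpha>_def]
  have Q_root: "poly (map_poly real_of_int Q) \<alpha> = 0"
    unfolding \<alpha>_def Q_def using poly_cf_metallic_poly_eq_0_iff[OF pos metallic_mean_pos] by simp
  have Q_xi: "poly (map_poly real_of_int Q) (cf_value a) \<noteq> 0"
  proof -
    define z where "z = cf_value (\<lambda>i. a (Suc M + i))"
    have "0 < z"
      using cf_value_ge_first_quotient[OF pos_quotients_shift[OF pos, of M]]
        pos_quotientsD[OF pos, of "Suc M"]
      unfolding z_def by simp
    moreover have "cf_value a = cf_mobius a M z" unfolding z_def by (rule cf_value_tail[OF pos])
    ultimately show ?thesis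
      using close(1) poly_cf_metallic_poly_eq_0_iff[OF pos] unfolding Q_def \<alpha>_def by auto
  qed
  then have "Q \<noteq> 0" by auto
  moreover have "degree Q \<le> 2" unfolding Q_def cf_metallic_poly_def mobius_quadratic_def by simp
  ultimately have P: "is_min_poly_Z (primitive_part Q) \<alpha>" "degree (primitive_part Q) = 2"
    using primitive_part_min_poly Q_root cf_mobius_metallic_irrational[OF c] unfolding \<alpha>_def by auto
  moreover have "height (primitive_part Q) \<le> 2 * (int c + 1) * int (quot_prod a (Suc M)) ^ 2"
    using height_primitive_part_le[of Q] height_cf_metallic_poly[of a M c]
    unfolding Q_def by linarith
  moreover have "poly (map_poly real_of_int (primitive_part Q)) \<alpha> = 0"
    using P(1) unfolding is_min_poly_Z_def by simp
  moreover have "poly (map_poly real_of_int (primitive_part Q)) (cf_value a) \<noteq> 0"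
    using Q_xi poly_of_int_primitive_part[of Q "cf_value a"] by auto
  ultimately show ?thesis using that close by blast
qed

section \<open>The continued fraction with repeated blocks\<close>

definition block_start :: "(nat \<Rightarrow> nat) \<Rightarrow> nat \<Rightarrow> nat" where
  "block_start l j = (\<Sum>k<j. l k)"

lemma block_start_Suc: "block_start l (Suc j) = block_start l j + l j"
  by (simp add: block_start_def)

lemma block_quotients_block:
  assumes "d \<in> {1..l j}"
  shows "block_quotients b l (block_start l j + d) = b j"
proof -
  have "(LEAST i. block_start l j + d \<le> (\<Sum>k\<le>i. l k)) = j"
  proof (rule Least_equality)
    show "block_start l j + d \<le> (\<Sum>k\<le>j. l k)"
      using assms by (simp add: block_start_def lessThan_Suc_atMost[symmetric])
  next
    fix i assume i: "block_start l j + d \<le> (\<Sum>k\<le>i. l k)"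
    show "j \<le> i"
    proof (rule ccontr)
      assume "\<not> j \<le> i"
      then have "(\<Sum>k<Suc i. l k) \<le> (\<Sum>k<j. l k)" by (intro sum_mono2) auto
      then show False using i assms by (simp add: block_start_def lessThan_Suc_atMost)
    qed
  qed
  then show ?thesis unfolding block_quotients_def using assms by simp
qed

lemma pos_quotients_block_quotients: "(\<And>n. 0 < b n) \<Longrightarrow> pos_quotients (block_quotients b l)"
  unfolding pos_quotients_def block_quotients_def by (simp add: Suc_le_eq)

definition block_height :: "(nat \<Rightarrow> nat) \<Rightarrow> (nat \<Rightarrow> nat) \<Rightarrow> nat \<Rightarrow> nat" where
  "block_height b l j = (\<Prod>i<j. (b i + 1) ^ l i)"

lemma block_height_ge_1: "1 \<le> block_height b l j"
  unfolding block_height_def by (intro prod_ge_1 one_le_power) simp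

lemma quot_prod_block_start:
  "quot_prod (block_quotients b l) (Suc (block_start l j)) = block_height b l j"
proof (induction j)
  case 0
  show ?case by (simp add: quot_prod_def block_start_def block_quotients_def block_height_def)
next
  case (Suc j)
  let ?a = "block_quotients b l"
  have "quot_prod ?a (Suc (block_start l j + d))
      = quot_prod ?a (Suc (block_start l j)) * (b j + 1) ^ d"
    if "d \<le> l j" for d
    using that
  proof (induction d)
    case (Suc d)
    then have "?a (Suc (block_start l j + d)) = b j"
      using block_quotients_block[of "Suc d" l j b] by simp
    then have "quot_prod ?a (Suc (block_start l j + Suc d))
        = quot_prod ?a (Suc (block_start l j + d)) * (b j + 1)"
      by (simp only: add_Suc_right quot_prod_Suc)
    then show ?case using Suc by (simp add: algebra_simps)
  qed simp
  then show ?case using Suc.IH by (simp add: block_start_Suc block_height_def)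
qed

lemma abs_xi_bl_le_1:
  assumes "\<And>n. 0 < b n"
  shows "\<bar>xi_bl b l\<bar> \<le> 1"
proof -
  define a where "a = block_quotients b l"
  have pos: "pos_quotients a" unfolding a_def using assms by (rule pos_quotients_block_quotients)
  define z where "z = cf_value (\<lambda>i. a (Suc 0 + i))"
  have z: "1 \<le> z"
    using cf_value_ge_first_quotient[OF pos_quotients_shift[OF pos, of 0]]
      pos_quotientsD[OF pos, of 1]
    unfolding z_def by simp
  have "xi_bl b l = 1 / z"
    using cf_value_tail[OF pos, of 0] cf_mobius_0[of z a] z
    unfolding xi_bl_def z_def a_def by (simp add: block_quotients_def)
  then show ?thesis using z by simp
qed

lemma xi_bl_linear_approx_block:
  assumes b: "\<And>n. 0 < b n" and l: "\<And>n. 0 < l n"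
  obtains P :: "int poly" where "degree P \<le> 1" "height P \<le> int (block_height b l j)"
    "0 < \<bar>poly (map_poly real_of_int P) (xi_bl b l)\<bar>"
    "\<bar>poly (map_poly real_of_int P) (xi_bl b l)\<bar> \<le> 1 / b j"
proof -
  define a n where "a = block_quotients b l" and "n = block_start l j"
  have pos: "pos_quotients a" unfolding a_def using b by (rule pos_quotients_block_quotients)
  define p q where "p = cf_num a (Suc n)" and "q = cf_den a (Suc n)"
  define P where "P = [:- int p, int q:]"
  have "a (Suc n) = b j"
    using block_quotients_block[of 1 l j b] l[of j] unfolding a_def n_def by simp
  moreover have "poly (map_poly real_of_int P) (xi_bl b l) = q * cf_value a - p"
    unfolding P_def xi_bl_def a_def by (simp add: map_poly_pCons)
  moreover have "height P \<le> int (quot_prod a (Suc n))"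
  proof (rule height_leI)
    have "p \<le> quot_prod a (Suc n)" "q \<le> quot_prod a (Suc n)"
      using cf_num_den_le_quot_prod[of a "Suc n"] unfolding p_def q_def by simp_all
    then show "\<bar>coeff P i\<bar> \<le> int (quot_prod a (Suc n))" for i
      unfolding P_def by (auto simp: coeff_pCons split: nat.splits)
  qed
  then have "height P \<le> int (block_height b l j)"
    unfolding a_def n_def quot_prod_block_start .
  ultimately show ?thesis
    using that[of P] cf_value_convergent_dist[OF pos, of n] unfolding P_def p_def q_def by simp
qed

lemma xi_bl_quadratic_approx_block:
  assumes b: "\<And>n. 0 < b n" and l: "\<And>n. 0 < l n" and increase: "b j < b (Suc j)"
  obtains \<alpha> P where "is_min_poly_Z P \<alpha>" "degree P = 2"
    "height P \<le> 2 * (int (b j) + 1) * int (block_height b l j) ^ 2"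
    "0 < \<bar>xi_bl b l - \<alpha>\<bar>" "\<bar>xi_bl b l - \<alpha>\<bar> \<le> 1 / real (b j) ^ (2 * l j)"
    "0 < \<bar>poly (map_poly real_of_int P) (xi_bl b l)\<bar>"
    "\<bar>poly (map_poly real_of_int P) (xi_bl b l)\<bar> \<le> 5 * real_of_int (height P) * \<bar>xi_bl b l - \<alpha>\<bar>"
proof -
  define a M where "a = block_quotients b l" and "M = block_start l j"
  have pos: "pos_quotients a" unfolding a_def using b by (rule pos_quotients_block_quotients)
  have "1 \<le> b j" using b[of j] by simp
  moreover have "a (M + d) = b j" if "d \<in> {1..l j}" for d
    using block_quotients_block[of d l j b] that unfolding a_def M_def by simp
  moreover have "b j < a (Suc (M + l j))"
    using block_quotients_block[of 1 l "Suc j" b] l[of "Suc j"] increase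
    unfolding a_def M_def by (simp add: block_start_Suc)
  ultimately obtain \<alpha> P where P: "is_min_poly_Z P \<alpha>" "degree P = 2"
      "height P \<le> 2 * (int (b j) + 1) * int (quot_prod a (Suc M)) ^ 2"
      "0 < \<bar>xi_bl b l - \<alpha>\<bar>" "\<bar>xi_bl b l - \<alpha>\<bar> \<le> 1 / real (b j) ^ (2 * l j)"
      "poly (map_poly real_of_int P) \<alpha> = 0" "poly (map_poly real_of_int P) (xi_bl b l) \<noteq> 0"
    using cf_block_quadratic_approx[OF pos] unfolding xi_bl_def a_def by metis
  have "1 \<le> real (b j) ^ (2 * l j)" using \<open>1 \<le> b j\<close> by simp
  then have "1 / real (b j) ^ (2 * l j) \<le> 1" by (simp add: divide_le_eq)
  then have "\<bar>xi_bl b l - \<alpha>\<bar> \<le> 1" using P(5) by linarith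
  then have "\<bar>\<alpha>\<bar> \<le> 2" using abs_xi_bl_le_1[of b l, OF b] by linarith
  then have "\<bar>poly (map_poly real_of_int P) (xi_bl b l)\<bar>
      \<le> 5 * real_of_int (height P) * \<bar>xi_bl b l - \<alpha>\<bar>"
    using abs_poly_diff_le_degree2[of P "xi_bl b l" 2 \<alpha>] P(2,6) abs_xi_bl_le_1[of b l, OF b] by simp
  moreover have "quot_prod a (Suc M) = block_height b l j"
    unfolding a_def M_def by (rule quot_prod_block_start)
  ultimately show ?thesis using that P by simp
qed

section \<open>Growth of the blocks\<close>

definition log_block_height :: "(nat \<Rightarrow> nat) \<Rightarrow> (nat \<Rightarrow> nat) \<Rightarrow> nat \<Rightarrow> real" where
  "log_block_height b l j = (\<Sum>i<j. real (l i) * ln (real (b i) + 1))"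

lemma ln_block_height: "ln (real (block_height b l j)) = log_block_height b l j"
  unfolding log_block_height_def block_height_def by (simp add: ln_prod ln_realpow add.commute)

lemma log_block_height_nonneg: "0 \<le> log_block_height b l j"
  unfolding log_block_height_def by (intro sum_nonneg) simp

lemma ln_le_log_block_height:
  assumes "0 < l j"
  shows "ln (real (b j) + 1) \<le> log_block_height b l (Suc j)"
proof -
  have "ln (real (b j) + 1) \<le> real (l j) * ln (real (b j) + 1)"
    using assms by (simp add: Suc_le_eq mult_le_cancel_right1)
  then show ?thesis using log_block_height_nonneg[of b l j] by (simp add: log_block_height_def)
qed

lemma ln_add_one_le_twice_ln:
  fixes x :: real
  assumes "2 \<le> x"
  shows "ln (x + 1) \<le> 2 * ln x"
proof -
  have "2 * x \<le> x * x" using assms by (intro mult_right_mono) auto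
  then have "x + 1 \<le> x * x" using assms by linarith
  then have "ln (x + 1) \<le> ln (x * x)" using assms by simp
  also have "\<dots> = 2 * ln x" using assms by (simp add: ln_mult)
  finally show ?thesis .
qed

lemma log_block_height_le_twice_sum:
  assumes "\<And>i. N \<le> i \<Longrightarrow> 2 \<le> real (b i)" and "N \<le> j"
  shows "log_block_height b l (Suc j) - 2 * (\<Sum>k\<le>j. real (l k) * ln (real (b k)))
    \<le> log_block_height b l (Suc N) - 2 * (\<Sum>k\<le>N. real (l k) * ln (real (b k)))"
  using assms(2)
proof (induction j rule: dec_induct)
  case (step j)
  have "real (l (Suc j)) * ln (real (b (Suc j)) + 1)
      \<le> real (l (Suc j)) * (2 * ln (real (b (Suc j))))"
    using assms(1)[of "Suc j"] step.hyps(1) by (intro mult_left_mono ln_add_one_le_twice_ln) auto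
  then show ?case using step.IH by (simp add: log_block_height_def algebra_simps)
qed simp

lemma log_sum_tendsto:
  assumes b: "\<And>n. 0 < b n" and l: "\<And>n. 0 < l n"
    and b_lim: "filterlim (\<lambda>n. real (b n)) at_top sequentially"
  shows "filterlim (\<lambda>j. \<Sum>k\<le>j. real (l k) * ln (real (b k))) at_top sequentially"
proof -
  have "ln (real (b j)) \<le> (\<Sum>k\<le>j. real (l k) * ln (real (b k)))" for j
  proof -
    have "ln (real (b j)) \<le> real (l j) * ln (real (b j))"
      using l[of j] b[of j] by (simp add: Suc_le_eq mult_le_cancel_right1)
    also have "\<dots> \<le> (\<Sum>k\<le>j. real (l k) * ln (real (b k)))"
      using b by (intro member_le_sum) (auto simp: Suc_le_eq)
    finally show ?thesis .
  qed
  moreover have "filterlim (\<lambda>n. ln (real (b n))) at_top sequentially"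
    using filterlim_compose[OF ln_at_top b_lim] by (simp add: o_def)
  ultimately show ?thesis by (auto elim!: filterlim_at_top_mono)
qed

lemma log_block_height_negligible:
  assumes b: "\<And>n. 0 < b n" and l: "\<And>n. 0 < l n"
    and b_lim: "filterlim (\<lambda>n. real (b n)) at_top sequentially"
    and ratio: "filterlim (\<lambda>n. ln (real (b (Suc n))) / (\<Sum>k\<le>n. real (l k) * ln (real (b k))))
      at_top sequentially"
    and w: "0 \<le> w"
  shows "\<forall>\<^sub>F j in sequentially. w * log_block_height b l j + C \<le> ln (b j)"
proof -
  define T where "T j = (\<Sum>k\<le>j. real (l k) * ln (real (b k)))" for j
  obtain i0 where i0: "\<And>i. i0 \<le> i \<Longrightarrow> 2 \<le> real (b i)"
    using filterlim_at_top[THEN iffD1, rule_format, OF b_lim, of 2]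
    by (auto simp: eventually_sequentially)
  define C0 where "C0 = log_block_height b l (Suc i0) - 2 * T i0"
  have "\<forall>\<^sub>F j in sequentially. max 1 (w * C0 + C) \<le> T j
      \<and> 2 * w + 1 \<le> ln (real (b (Suc j))) / T j \<and> i0 \<le> j"
    unfolding T_def
    by (intro eventually_conj eventually_ge_at_top
        filterlim_at_top[THEN iffD1, rule_format, OF log_sum_tendsto[OF b l b_lim]]
        filterlim_at_top[THEN iffD1, rule_format, OF ratio])
  then have "\<forall>\<^sub>F j in sequentially. w * log_block_height b l (Suc j) + C \<le> ln (b (Suc j))"
  proof (rule eventually_mono)
    fix j assume j: "max 1 (w * C0 + C) \<le> T j \<and> 2 * w + 1 \<le> ln (real (b (Suc j))) / T j \<and> i0 \<le> j"
    then have "(2 * w + 1) * T j \<le> ln (b (Suc j))" by (simp add: le_divide_eq)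
    moreover have "w * log_block_height b l (Suc j) \<le> w * (2 * T j + C0)"
      using log_block_height_le_twice_sum[where b = b and l = l and N = i0 and j = j, OF i0] j w
      unfolding C0_def T_def by (intro mult_left_mono) auto
    ultimately show "w * log_block_height b l (Suc j) + C \<le> ln (b (Suc j))"
      using j by (simp add: algebra_simps)
  qed
  then show ?thesis by (rule eventually_sequentially_Suc[THEN iffD1])
qed

lemma eventually_block_increase:
  assumes b: "\<And>n. 0 < b n" and l: "\<And>n. 0 < l n"
    and b_lim: "filterlim (\<lambda>n. real (b n)) at_top sequentially"
    and ratio: "filterlim (\<lambda>n. ln (real (b (Suc n))) / (\<Sum>k\<le>n. real (l k) * ln (real (b k))))
      at_top sequentially"
  shows "\<forall>\<^sub>F j in sequentially. b j < b (Suc j)"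
proof -
  have "\<forall>\<^sub>F j in sequentially. 1 * log_block_height b l j + 0 \<le> ln (b j)"
    by (rule log_block_height_negligible[OF b l b_lim ratio]) simp
  then have "\<forall>\<^sub>F j in sequentially. 1 * log_block_height b l (Suc j) + 0 \<le> ln (b (Suc j))"
    by (rule eventually_sequentially_Suc[THEN iffD2])
  then show ?thesis
  proof (rule eventually_mono)
    fix j assume "1 * log_block_height b l (Suc j) + 0 \<le> ln (b (Suc j))"
    then have "ln (real (b j) + 1) \<le> ln (b (Suc j))" using ln_le_log_block_height[of l j b, OF l]
      by simp
    then show "b j < b (Suc j)" using b[of "Suc j"] by simp
  qed
qed

lemma block_length_dominates:
  assumes b: "\<And>n. 0 < b n" and l: "\<And>n. 0 < l n"
    and b_lim: "filterlim (\<lambda>n. real (b n)) at_top sequentially"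
    and l_lim: "filterlim (\<lambda>n. real (l n)) at_top sequentially"
    and ratio: "filterlim (\<lambda>n. ln (real (b (Suc n))) / (\<Sum>k\<le>n. real (l k) * ln (real (b k))))
      at_top sequentially"
    and w: "0 \<le> w"
  shows "\<forall>\<^sub>F j in sequentially.
    w * (ln (real (b j) + 1) + 2 * log_block_height b l j) + C \<le> 2 * real (l j) * ln (b j)"
proof -
  have "filterlim (\<lambda>n. ln (real (b n))) at_top sequentially"
    using filterlim_compose[OF ln_at_top b_lim] by (simp add: o_def)
  then have "\<forall>\<^sub>F j in sequentially. 1 * log_block_height b l j + 0 \<le> ln (b j)
      \<and> \<bar>C\<bar> + w * ln 2 \<le> ln (b j) \<and> 2 * w + 1 \<le> real (l j)"
    using log_block_height_negligible[OF b l b_lim ratio, of 1 0]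
      filterlim_at_top[THEN iffD1, rule_format, OF l_lim]
    by (intro eventually_conj) (auto simp: filterlim_at_top)
  then show ?thesis
  proof (rule eventually_mono)
    fix j assume j: "1 * log_block_height b l j + 0 \<le> ln (b j)
      \<and> \<bar>C\<bar> + w * ln 2 \<le> ln (b j) \<and> 2 * w + 1 \<le> real (l j)"
    define L where "L = ln (real (b j))"
    have "0 \<le> w * ln 2" using w by simp
    then have L: "0 \<le> L" using j unfolding L_def by linarith
    have "ln (real (b j) + 1) \<le> ln (2 * real (b j))" using b[of j] by simp
    then have "ln (real (b j) + 1) \<le> ln 2 + L" using b[of j] unfolding L_def by (simp add: ln_mult)
    then have "w * (ln (real (b j) + 1) + 2 * log_block_height b l j) \<le> w * (ln 2 + 3 * L)"
      using j w unfolding L_def by (intro mult_left_mono) auto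
    moreover have "(2 * w + 1) * (2 * L) \<le> real (l j) * (2 * L)"
      using j L by (intro mult_right_mono) auto
    moreover have "w * (ln 2 + 3 * L) + C \<le> (2 * w + 1) * (2 * L)"
    proof -
      have "0 \<le> w * L" using w L by simp
      moreover have "C + w * ln 2 \<le> L" using j unfolding L_def by linarith
      ultimately show ?thesis using L by (simp add: algebra_simps)
    qed
    ultimately show "w * (ln (real (b j) + 1) + 2 * log_block_height b l j) + C
        \<le> 2 * real (l j) * ln (b j)"
      unfolding L_def by (simp add: mult.assoc)
  qed
qed

section \<open>Approximation exponents\<close>

lemma Sup_ereal_eq_infinity:
  assumes "\<And>w. 0 \<le> w \<Longrightarrow> P w"
  shows "Sup {ereal w | w. P w} = \<infinity>"
proof (rule ereal_top)
  fix B
  have "P (max B 0)" using assms by simp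
  then have "ereal (max B 0) \<in> {ereal w | w. P w}"
    by (intro CollectI exI[of _ "max B 0"] conjI refl)
  then have "ereal (max B 0) \<le> Sup {ereal w | w. P w}" by (rule Sup_upper)
  then show "ereal B \<le> Sup {ereal w | w. P w}" by (rule order_trans[rotated]) simp
qed

lemma inverse_le_powr_neg:
  fixes H B w :: real
  assumes "0 < H" "0 < B" "w * ln H \<le> ln B"
  shows "1 / B \<le> H powr (- w)"
proof -
  have "H powr w = exp (w * ln H)" using assms(1) by (simp add: powr_def mult.commute)
  also have "\<dots> \<le> B" using assms(2,3) by (metis exp_le_cancel_iff exp_ln)
  finally have "H powr w \<le> B" .
  then have "1 / B \<le> 1 / H powr w" using assms(1) by (simp add: frac_le)
  then show ?thesis by (simp add: powr_minus_divide)
qed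

lemma linear_exponent_witness:
  fixes R A B w :: real
  assumes "1 \<le> R" "1 \<le> A" "0 < B" "0 \<le> w" "w * (ln R + ln A) \<le> ln B"
  shows "\<exists>H. A \<le> H \<and> R \<le> H \<and> 1 / B \<le> H powr (- w)"
proof -
  define H where "H = max R A"
  have "H \<le> R * A" unfolding H_def using assms(1,2) by (auto simp: max_def mult_le_cancel_left1)
  then have "ln H \<le> ln (R * A)" using assms(1,2) unfolding H_def by simp
  also have "\<dots> = ln R + ln A" using assms(1,2) by (simp add: ln_mult)
  finally have "ln H \<le> ln R + ln A" .
  then have "w * ln H \<le> ln B" using assms(4,5) by (meson mult_left_mono order_trans)
  then have "1 / B \<le> H powr (- w)" using assms(1,3)
    unfolding H_def by (intro inverse_le_powr_neg) auto
  moreover have "A \<le> H" "R \<le> H" unfolding H_def by auto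
  ultimately show ?thesis by blast
qed

lemma quadratic_approx_exponent:
  fixes h K w d v :: real
  assumes "1 \<le> h" "5 * h \<le> K" "d \<le> K powr (- (w + 2))" "\<bar>v\<bar> \<le> 5 * h * d"
  shows "d \<le> 1 / h * K powr (- w)" and "\<bar>v\<bar> \<le> K powr (- w)"
proof -
  define X where "X = K powr (- w)"
  have K: "5 \<le> K" using assms(1,2) by linarith
  have X: "0 < X" using K unfolding X_def by simp
  have "K powr (- (w + 2)) = X * K powr (- 2)" unfolding X_def by (simp add: powr_add[symmetric])
  also have "K powr (- 2) = 1 / K\<^sup>2" using K by (simp add: powr_minus_divide)
  finally have d: "d \<le> X / K\<^sup>2" using assms(3) by simp
  have "1 * K \<le> K * K" using K by (intro mult_right_mono) auto
  then have hK: "5 * h \<le> K\<^sup>2" using assms(2) by (simp add: power2_eq_square)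
  have "X / K\<^sup>2 \<le> X / h" using hK X assms(1) K by (intro divide_left_mono mult_pos_pos) auto
  then show "d \<le> 1 / h * K powr (- w)" using d unfolding X_def by simp
  have "5 * h * d \<le> 5 * h * (X / K\<^sup>2)" using assms(1) d by (intro mult_left_mono) auto
  then have "\<bar>v\<bar> \<le> 5 * h * (X / K\<^sup>2)" using assms(4) by linarith
  also have "\<dots> \<le> X" using hK X K by (simp add: field_simps)
  finally show "\<bar>v\<bar> \<le> K powr (- w)" unfolding X_def .
qed

lemma quadratic_exponent_witness:
  fixes h Y A B d v w :: real
  assumes h: "1 \<le> h" "h \<le> 2 * Y" and A: "1 \<le> A" and B: "0 < B" and w: "0 \<le> w"
    and d: "d \<le> 1 / B" and v: "\<bar>v\<bar> \<le> 5 * h * d"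
    and growth: "(w + 2) * (ln 10 + ln Y + ln A) \<le> ln B"
  shows "\<exists>H. A \<le> H \<and> h \<le> H \<and> d \<le> 1 / h * H powr (- w) \<and> \<bar>v\<bar> \<le> H powr (- w)"
proof -
  define K where "K = 5 * max h A"
  have K: "A \<le> K" "5 * h \<le> K" using h A unfolding K_def by auto
  have "max h A \<le> h * A" using h A
    by (auto simp: max_def mult_le_cancel_left1 mult_le_cancel_right1)
  also have "\<dots> \<le> (2 * Y) * A" using h A by (intro mult_right_mono) auto
  finally have "K \<le> 10 * (Y * A)" unfolding K_def by (simp add: mult_ac)
  then have "ln K \<le> ln (10 * (Y * A))" using h A K by simp
  also have "\<dots> = ln 10 + ln Y + ln A" using h A by (simp add: ln_mult)
  finally have "ln K \<le> ln 10 + ln Y + ln A" .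
  then have "(w + 2) * ln K \<le> (w + 2) * (ln 10 + ln Y + ln A)" using w
    by (intro mult_left_mono) auto
  then have "1 / B \<le> K powr (- (w + 2))" using growth B K A by (intro inverse_le_powr_neg) auto
  then have "d \<le> K powr (- (w + 2))" using d by linarith
  then show ?thesis using quadratic_approx_exponent[OF h(1) K(2) _ v] K h
    by (intro exI[of _ K]) auto
qed

lemma xi_bl_linear_approx:
  assumes b: "\<And>n. 0 < b n" and l: "\<And>n. 0 < l n"
    and b_lim: "filterlim (\<lambda>n. real (b n)) at_top sequentially"
    and ratio: "filterlim (\<lambda>n. ln (real (b (Suc n))) / (\<Sum>k\<le>n. real (l k) * ln (real (b k))))
      at_top sequentially"
    and w: "0 \<le> w"
  shows "\<exists>H::real. H > H0 \<and>
      (\<exists>P::int poly. degree P \<le> 1 \<and> real_of_int (height P) \<le> H \<and>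
          0 < \<bar>poly (map_poly real_of_int P) (xi_bl b l)\<bar> \<and>
          \<bar>poly (map_poly real_of_int P) (xi_bl b l)\<bar> \<le> H powr (- w))"
proof -
  define A where "A = \<bar>H0\<bar> + 1"
  obtain j where j: "w * log_block_height b l j + w * ln A \<le> ln (b j)"
    using eventually_happens'[OF sequentially_bot
        log_block_height_negligible[where b = b and l = l and C = "w * ln A", OF b l b_lim ratio w]]
    by blast
  obtain P :: "int poly" where P: "degree P \<le> 1" "height P \<le> int (block_height b l j)"
    "0 < \<bar>poly (map_poly real_of_int P) (xi_bl b l)\<bar>"
    "\<bar>poly (map_poly real_of_int P) (xi_bl b l)\<bar> \<le> 1 / b j"
    by (rule xi_bl_linear_approx_block[where b = b and l = l and j = j, OF b l])
  have "\<exists>H. A \<le> H \<and> real (block_height b l j) \<le> H \<and> 1 / b j \<le> H powr (- w)"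
    using j b[of j] w block_height_ge_1[of b l j]
    by (intro linear_exponent_witness) (auto simp: A_def ln_block_height distrib_left)
  then obtain H where H: "H0 < H" "real (block_height b l j) \<le> H" "1 / b j \<le> H powr (- w)"
    unfolding A_def by (meson abs_ge_self less_add_one order_le_less_trans order_less_le_trans)
  have "real_of_int (height P) \<le> H" using P(2) H(2) by (simp flip: of_int_le_iff)
  then show ?thesis using H P by force
qed

lemma xi_bl_quadratic_approx:
  assumes b: "\<And>n. 0 < b n" and l: "\<And>n. 0 < l n"
    and b_lim: "filterlim (\<lambda>n. real (b n)) at_top sequentially"
    and l_lim: "filterlim (\<lambda>n. real (l n)) at_top sequentially"
    and ratio: "filterlim (\<lambda>n. ln (real (b (Suc n))) / (\<Sum>k\<le>n. real (l k) * ln (real (b k))))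
      at_top sequentially"
    and w: "0 \<le> w"
  shows "\<exists>H::real. H > H0 \<and> (\<exists>\<alpha> P. is_min_poly_Z P \<alpha> \<and> degree P = 2 \<and>
      real_of_int (height P) \<le> H \<and>
      0 < \<bar>xi_bl b l - \<alpha>\<bar> \<and> \<bar>xi_bl b l - \<alpha>\<bar> \<le> (1 / real_of_int (height P)) * H powr (- w) \<and>
      0 < \<bar>poly (map_poly real_of_int P) (xi_bl b l)\<bar> \<and>
      \<bar>poly (map_poly real_of_int P) (xi_bl b l)\<bar> \<le> H powr (- w))"
proof -
  define A where "A = \<bar>H0\<bar> + 1"
  obtain j where j: "(w + 2) * (ln (real (b j) + 1) + 2 * log_block_height b l j)
      + (w + 2) * (ln 10 + ln A) \<le> 2 * real (l j) * ln (b j)" and increase: "b j < b (Suc j)"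
    using eventually_happens'[OF sequentially_bot eventually_conj[OF
        block_length_dominates[where b = b and l = l and w = "w + 2"
          and C = "(w + 2) * (ln 10 + ln A)", OF b l b_lim l_lim ratio]
        eventually_block_increase[where b = b and l = l, OF b l b_lim ratio]]] w
    by auto
  obtain \<alpha> P where P: "is_min_poly_Z P \<alpha>" "degree P = 2"
      "height P \<le> 2 * (int (b j) + 1) * int (block_height b l j) ^ 2"
      "0 < \<bar>xi_bl b l - \<alpha>\<bar>" "\<bar>xi_bl b l - \<alpha>\<bar> \<le> 1 / real (b j) ^ (2 * l j)"
      "0 < \<bar>poly (map_poly real_of_int P) (xi_bl b l)\<bar>"
      "\<bar>poly (map_poly real_of_int P) (xi_bl b l)\<bar> \<le> 5 * real_of_int (height P) * \<bar>xi_bl b l - \<alpha>\<bar>"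
    by (rule xi_bl_quadratic_approx_block[where b = b and l = l and j = j, OF b l increase])
  have "1 \<le> height P" using P(2) by (intro height_ge_1) auto
  define R Y where "R = real (block_height b l j)" and "Y = (real (b j) + 1) * R\<^sup>2"
  have R: "1 \<le> R" unfolding R_def using block_height_ge_1 by simp
  have "real_of_int (height P) \<le> real_of_int (2 * (int (b j) + 1) * int (block_height b l j) ^ 2)"
    using P(3) by (simp only: of_int_le_iff)
  also have "\<dots> = 2 * Y" unfolding Y_def R_def by simp
  finally have "real_of_int (height P) \<le> 2 * Y" .
  moreover have "ln Y = ln (real (b j) + 1) + 2 * log_block_height b l j"
    using R unfolding Y_def by (simp add: ln_mult ln_realpow R_def ln_block_height)
  then have "(w + 2) * (ln 10 + ln Y + ln A) \<le> ln (real (b j) ^ (2 * l j))"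
    using j b[of j] by (simp add: ln_realpow algebra_simps)
  ultimately have "\<exists>H. A \<le> H \<and> real_of_int (height P) \<le> H \<and>
      \<bar>xi_bl b l - \<alpha>\<bar> \<le> 1 / real_of_int (height P) * H powr (- w) \<and>
      \<bar>poly (map_poly real_of_int P) (xi_bl b l)\<bar> \<le> H powr (- w)"
    using P(5,7) \<open>1 \<le> height P\<close> b[of j] w
    by (intro quadratic_exponent_witness) (auto simp: A_def)
  moreover have "H0 < A" unfolding A_def by simp
  ultimately show ?thesis using P by (meson order_less_le_trans)
qed

theorem theorem1p2:
  fixes b l :: "nat \<Rightarrow> nat"
  assumes "\<And>n. b n > 0" and "\<And>n. l n > 0"
    and "filterlim (\<lambda>n. real (b n)) at_top sequentially"
    and "filterlim (\<lambda>n. real (l n)) at_top sequentially"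
    and "filterlim (\<lambda>n. ln (real (b (Suc n))) / (\<Sum>k\<le>n. real (l k) * ln (real (b k))))
           at_top sequentially"
  shows "liouville (xi_bl b l) \<and> w_eq 2 (xi_bl b l) = \<infinity> \<and> w_star_eq 2 (xi_bl b l) = \<infinity>"
proof (intro conjI)
  show "liouville (xi_bl b l)"
    unfolding liouville_def w1_def
    by (intro Sup_ereal_eq_infinity allI xi_bl_linear_approx[OF assms(1,2,3,5)])
  show "w_eq 2 (xi_bl b l) = \<infinity>"
    unfolding w_eq_def using xi_bl_quadratic_approx[OF assms]
    by (intro Sup_ereal_eq_infinity allI) (unfold is_min_poly_Z_def, blast)
  show "w_star_eq 2 (xi_bl b l) = \<infinity>"
    unfolding w_star_eq_def using xi_bl_quadratic_approx[OF assms]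
    by (intro Sup_ereal_eq_infinity allI) blast
qed

end
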